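(* Any non-adaptive one-sided tester for submodularity of functions $f:\{0,1\}^n\to\mathbb{R}$ requires $\Omega(\sqrt{n})$ queries. Any adaptive one-sided tester for submodularity requires $\Omega(\log n)$ queries.
   Context: $f$ is submodular if $f(x+\mathbf{e}_i)-f(x)\ge f(y+\mathbf{e}_i)-f(y)$ for all $i$ and $x\le y$ with $x_i=y_i=0$. $f$ is $\epsilon$-far from submodular if every submodular $g$ differs from $f$ on more than an $\epsilon$ fraction of points. A one-sided tester for submodularity (with proximity parameter $\epsilon$) is a randomized algorithm with query access to $f$ that answers YES with probability $1$ if $f$ is submodular and answers NO with probability at least $2/3$ if $f$ is $\epsilon$-far from submodular. It is non-adaptive if its queries do not depend on answers to previous queries. *)

theory Defs
  imports "HOL-Probability.Probability"
begin

text \<open>Points of the hypercube {0,1}^n are represented as subsets of {..<n}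
  (x_i = 1 iff i \<in> x).  A function f : {0,1}^n \<rightarrow> R is a function
  nat set \<Rightarrow> real, of which only the values on cube n matter.\<close>

definition cube :: "nat \<Rightarrow> nat set set" where
  "cube n = Pow {..<n}"

definition submodular_on :: "nat \<Rightarrow> (nat set \<Rightarrow> real) \<Rightarrow> bool" where
  "submodular_on n f \<longleftrightarrow>
     (\<forall>x y i. x \<subseteq> y \<and> y \<subseteq> {..<n} \<and> i < n \<and> i \<notin> y \<longrightarrow>
        f (insert i x) - f x \<ge> f (insert i y) - f y)"

definition eps_far_submod :: "nat \<Rightarrow> real \<Rightarrow> (nat set \<Rightarrow> real) \<Rightarrow> bool" where
  "eps_far_submod n eps f \<longleftrightarrow>
     (\<forall>g. submodular_on n g \<longrightarrow>
        real (card {x \<in> cube n. f x \<noteq> g x}) > eps * 2 ^ n)"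

text \<open>Non-adaptive randomized tester: a random pair (Q, D) of a query list Q
  and a decision rule D applied to the answer list (True = YES).\<close>

definition na_one_sided_tester ::
  "nat \<Rightarrow> real \<Rightarrow> nat \<Rightarrow> ((nat set list \<times> (real list \<Rightarrow> bool)) pmf) \<Rightarrow> bool" where
  "na_one_sided_tester n eps q T \<longleftrightarrow>
     (\<forall>(Q, D) \<in> set_pmf T. length Q \<le> q \<and> set Q \<subseteq> cube n) \<and>
     (\<forall>f. submodular_on n f \<longrightarrow>
        measure_pmf.prob T {(Q, D). D (map f Q)} = 1) \<and>
     (\<forall>f. eps_far_submod n eps f \<longrightarrow>
        measure_pmf.prob T {(Q, D). \<not> D (map f Q)} \<ge> 2/3)"

text \<open>Adaptive deterministic query algorithm: a decision tree.\<close>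

datatype qtree = Leaf bool | Query "nat set" "real \<Rightarrow> qtree"

primrec run :: "qtree \<Rightarrow> (nat set \<Rightarrow> real) \<Rightarrow> bool" where
  "run (Leaf b) f = b"
| "run (Query x k) f = run (k (f x)) f"

primrec qpath :: "qtree \<Rightarrow> (nat set \<Rightarrow> real) \<Rightarrow> nat set list" where
  "qpath (Leaf b) f = []"
| "qpath (Query x k) f = x # qpath (k (f x)) f"

definition ad_one_sided_tester ::
  "nat \<Rightarrow> real \<Rightarrow> nat \<Rightarrow> qtree pmf \<Rightarrow> bool" where
  "ad_one_sided_tester n eps q T \<longleftrightarrow>
     (\<forall>t \<in> set_pmf T. \<forall>f. length (qpath t f) \<le> q \<and> set (qpath t f) \<subseteq> cube n) \<and>
     (\<forall>f. submodular_on n f \<longrightarrow> measure_pmf.prob T {t. run t f} = 1) \<and>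
     (\<forall>f. eps_far_submod n eps f \<longrightarrow> measure_pmf.prob T {t. \<not> run t f} \<ge> 2/3)"

end

theory Submission
  imports Defs
begin

text \<open>Let \<open>f\<^sub>i(x) = -(3/4)|x|\<^sup>2 + [x\<^sub>i = x\<^sub>i\<^sub>+\<^sub>1]\<close>.  Adding the steep concave term \<open>-(3/4)|x|\<^sup>2\<close> makes
  every perturbation with values in \<open>{0, 1/2, 1}\<close> submodular, except where a square
  \<open>x, x+e\<^sub>j, x+e\<^sub>k, x+e\<^sub>j+e\<^sub>k\<close> carries the values \<open>1, 0, 0, 1\<close>.  For \<open>f\<^sub>i\<close> this happens exactly on the
  \<open>2\<^sup>n\<^sup>-\<^sup>2\<close> disjoint squares in the directions \<open>i, i+1\<close> based at points with \<open>x\<^sub>i = x\<^sub>i\<^sub>+\<^sub>1 = 0\<close>, so \<open>f\<^sub>i\<close>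
  is \<open>1/8\<close>-far from submodular.  On the other hand the values of \<open>f\<^sub>i\<close> on a query set \<open>Q\<close>,
  completed by the perturbation value \<open>1/2\<close> off \<open>Q\<close>, give a submodular function unless \<open>Q\<close>
  contains both ends \<open>x\<close>, \<open>x+e\<^sub>i+e\<^sub>i\<^sub>+\<^sub>1\<close> of a diagonal of such a square.  Hence a one-sided tester
  rejects \<open>f\<^sub>i\<close> only if its queries contain such a diagonal, which \<open>q\<close> queries do for at most
  \<open>q\<^sup>2\<close> indices \<open>i\<close>; averaging over \<open>i\<close> gives \<open>(2/3)(n-1) \<le> q\<^sup>2\<close>.  An adaptive tester sees only
  two possible answers at each point on this family, so it follows at most \<open>2\<^sup>q\<close> query paths,
  whence \<open>(2/3)(n-1) \<le> 2\<^sup>q q\<^sup>2\<close>.\<close>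

definition concave_card :: "nat set \<Rightarrow> real" where
  "concave_card x = -(3/4) * real (card x) ^ 2"

definition agree_ind :: "nat \<Rightarrow> nat set \<Rightarrow> real" where
  "agree_ind i x = (if i \<in> x \<longleftrightarrow> Suc i \<in> x then 1 else 0)"

definition hard_fn :: "nat \<Rightarrow> nat set \<Rightarrow> real" where
  "hard_fn i x = concave_card x + agree_ind i x"

definition hard_fn_completion :: "nat \<Rightarrow> nat set set \<Rightarrow> nat set \<Rightarrow> real" where
  "hard_fn_completion i Q x = concave_card x + (if x \<in> Q then agree_ind i x else 1/2)"

definition queries_diagonal :: "nat \<Rightarrow> nat set set \<Rightarrow> bool" where
  "queries_diagonal i Q \<longleftrightarrow>
     (\<exists>x. x \<in> Q \<and> insert i (insert (Suc i) x) \<in> Q \<and> i \<notin> x \<and> Suc i \<notin> x)"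

section \<open>Submodularity of perturbations of the concave part\<close>

lemma concave_card_insert:
  "finite x \<Longrightarrow> a \<notin> x \<Longrightarrow> concave_card (insert a x) - concave_card x = -(3/4) * (2 * real (card x) + 1)"
  by (simp add: concave_card_def power2_eq_square algebra_simps)

lemma submodular_on_concave_card_plus:
  fixes H :: "nat set \<Rightarrow> real"
  assumes bounded: "\<And>x. 0 \<le> H x \<and> H x \<le> 1"
    and square: "\<And>x j k. j \<noteq> k \<Longrightarrow> j \<notin> x \<Longrightarrow> k \<notin> x \<Longrightarrow>
       H (insert j x) + H (insert k x) - H x - H (insert j (insert k x)) \<ge> -3/2"
  shows "submodular_on n (\<lambda>x. concave_card x + H x)"
  unfolding submodular_on_def
proof (intro allI impI)
  fix x y i assume xy: "x \<subseteq> y \<and> y \<subseteq> {..<n} \<and> i < n \<and> i \<notin> y"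
  have "finite y" using xy finite_subset by blast
  moreover have "finite x" using xy \<open>finite y\<close> finite_subset by blast
  moreover have "i \<notin> x" using xy by blast
  ultimately have concave: "concave_card (insert i x) - concave_card x - (concave_card (insert i y) - concave_card y)
      = 3/2 * (real (card y) - real (card x))"
    using concave_card_insert[of x i] concave_card_insert[of y i] xy by (simp add: algebra_simps)
  have "card x \<le> card y" using xy \<open>finite y\<close> card_mono by blast
  then consider "card y = card x" | "card y = card x + 1" | "card y \<ge> card x + 2" by linarith
  then show "concave_card (insert i y) + H (insert i y) - (concave_card y + H y)
      \<le> concave_card (insert i x) + H (insert i x) - (concave_card x + H x)"
  proof cases
    case 1
    then have "x = y" using card_subset_eq[OF \<open>finite y\<close>] xy by metis
    then show ?thesis by simp
  next
    case 2
    have "card (y - x) = 1" using 2 xy \<open>finite x\<close> by (simp add: card_Diff_subset)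
    then obtain k where "y - x = {k}" using card_1_singletonE by blast
    then have "y = insert k x" "k \<notin> x" "k \<noteq> i" using xy by blast+
    then show ?thesis using square[of i k x] \<open>i \<notin> x\<close> concave 2 by simp
  next
    case 3
    then show ?thesis using concave bounded[of "insert i x"] bounded[of x]
        bounded[of "insert i y"] bounded[of y] by simp
  qed
qed

lemma hard_fn_completion_submodular:
  assumes "\<not> queries_diagonal i Q"
  shows "submodular_on n (hard_fn_completion i Q)"
proof -
  define H where "H x = (if x \<in> Q then agree_ind i x else 1/2)" for x
  have H_range: "H x \<in> {0, 1/2, 1}" for x by (simp add: H_def agree_ind_def)
  have "submodular_on n (\<lambda>x. concave_card x + H x)"
  proof (rule submodular_on_concave_card_plus)
    show "0 \<le> H x \<and> H x \<le> 1" for x using H_range[of x] by auto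
  next
    fix x :: "nat set" and j k :: nat
    assume jk: "j \<noteq> k" "j \<notin> x" "k \<notin> x"
    have "\<not> (H (insert j x) = 0 \<and> H (insert k x) = 0 \<and> H x = 1 \<and> H (insert j (insert k x)) = 1)"
    proof
      assume "H (insert j x) = 0 \<and> H (insert k x) = 0 \<and> H x = 1 \<and> H (insert j (insert k x)) = 1"
      then have "x \<in> Q" "insert j (insert k x) \<in> Q" and agree: "agree_ind i (insert j x) = 0"
        "agree_ind i (insert k x) = 0" "agree_ind i x = 1"
        by (auto simp: H_def split: if_splits)
      moreover from agree jk have "i \<notin> x" "Suc i \<notin> x"
        "insert j (insert k x) = insert i (insert (Suc i) x)"
        by (auto simp: agree_ind_def split: if_splits)
      ultimately show False using assms unfolding queries_diagonal_def by metis
    qed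
    with H_range[of "insert j x"] H_range[of "insert k x"] H_range[of x] H_range[of "insert j (insert k x)"]
    show "H (insert j x) + H (insert k x) - H x - H (insert j (insert k x)) \<ge> -3/2"
      by auto
  qed
  then show ?thesis unfolding hard_fn_completion_def[abs_def] H_def .
qed

lemma hard_fn_completion_eq_hard_fn: "x \<in> Q \<Longrightarrow> hard_fn_completion i Q x = hard_fn i x"
  by (simp add: hard_fn_completion_def hard_fn_def)

section \<open>Counting the detectable indices\<close>

lemma queries_diagonal_subset_image:
  "{i. queries_diagonal i Q} \<subseteq> (\<lambda>(x, y). Min (y - x)) ` (Q \<times> Q)"
proof
  fix i assume "i \<in> {i. queries_diagonal i Q}"
  then obtain x where x: "x \<in> Q" "insert i (insert (Suc i) x) \<in> Q" "i \<notin> x" "Suc i \<notin> x"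
    unfolding queries_diagonal_def by blast
  then have "Min (insert i (insert (Suc i) x) - x) = i"
    by (simp add: insert_Diff_if)
  then show "i \<in> (\<lambda>(x, y). Min (y - x)) ` (Q \<times> Q)" using x by force
qed

lemma finite_queries_diagonal: "finite Q \<Longrightarrow> finite {i. queries_diagonal i Q}"
  by (rule finite_subset[OF queries_diagonal_subset_image]) simp

lemma card_queries_diagonal_le:
  assumes "finite Q"
  shows "card {i. queries_diagonal i Q} \<le> card Q ^ 2"
proof -
  have "card {i. queries_diagonal i Q} \<le> card ((\<lambda>(x, y). Min (y - x)) ` (Q \<times> Q))"
    using assms by (intro card_mono[OF _ queries_diagonal_subset_image]) auto
  also have "\<dots> \<le> card (Q \<times> Q)" using assms by (intro card_image_le) simp
  finally show ?thesis by (simp add: card_cartesian_product power2_eq_square)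
qed

lemma card_queries_diagonal_list_le:
  "length Q \<le> q \<Longrightarrow> card {i. queries_diagonal i (set Q)} \<le> q ^ 2"
  using card_queries_diagonal_le[of "set Q"] card_length[of Q]
  by (meson finite_set order_trans power_mono zero_le)

section \<open>The hard functions are far from submodular\<close>

lemma hard_fn_differs_on_square:
  assumes g: "submodular_on n g" and "Suc i < n" and x: "x \<subseteq> {..<n}" "i \<notin> x" "Suc i \<notin> x"
  shows "\<exists>z \<in> {x, insert i x, insert (Suc i) x, insert i (insert (Suc i) x)}. hard_fn i z \<noteq> g z"
proof (rule ccontr)
  assume "\<not> ?thesis"
  then have agree: "hard_fn i z = g z" if "z \<in> {x, insert i x, insert (Suc i) x, insert i (insert (Suc i) x)}"
    for z using that by blast
  have "finite x" using x finite_subset by blast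
  have "g (insert i (insert (Suc i) x)) - g (insert (Suc i) x) \<le> g (insert i x) - g x"
    using g[unfolded submodular_on_def, rule_format, of x "insert (Suc i) x" i] assms by auto
  moreover have "hard_fn i (insert i (insert (Suc i) x)) - hard_fn i (insert (Suc i) x)
      - (hard_fn i (insert i x) - hard_fn i x) = 1/2"
    using concave_card_insert[of "insert (Suc i) x" i] concave_card_insert[of x i] \<open>finite x\<close> x
    by (simp add: hard_fn_def agree_ind_def algebra_simps)
  ultimately show False using agree by auto
qed

lemma card_Pow_Diff_pair:
  assumes "Suc i < n"
  shows "card (Pow ({..<n} - {i, Suc i})) = 2 ^ (n - 2)"
  using assms by (simp add: card_Pow card_Diff_subset)

lemma hard_fn_far:
  assumes "Suc i < n"
  shows "eps_far_submod n (1/8) (hard_fn i)"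
  unfolding eps_far_submod_def
proof (intro allI impI)
  fix g assume g: "submodular_on n g"
  define B where "B = Pow ({..<n} - {i, Suc i})"
  define D where "D = {x \<in> cube n. hard_fn i x \<noteq> g x}"
  have "B \<subseteq> (\<lambda>z. z - {i, Suc i}) ` D"
  proof
    fix x assume "x \<in> B"
    then have x: "x \<subseteq> {..<n}" "i \<notin> x" "Suc i \<notin> x" by (auto simp: B_def)
    then obtain z where "z \<in> {x, insert i x, insert (Suc i) x, insert i (insert (Suc i) x)}"
      "hard_fn i z \<noteq> g z"
      using hard_fn_differs_on_square[OF g assms] by blast
    moreover from this x assms have "z \<in> cube n" "z - {i, Suc i} = x" by (auto simp: cube_def)
    ultimately show "x \<in> (\<lambda>z. z - {i, Suc i}) ` D" unfolding D_def by blast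
  qed
  moreover have "finite D" by (simp add: D_def cube_def)
  ultimately have "card B \<le> card D"
    using card_mono card_image_le order_trans by (metis finite_imageI)
  then have "(2::real) ^ (n - 2) \<le> real (card D)"
    using card_Pow_Diff_pair[OF assms] unfolding B_def by (metis of_nat_le_iff of_nat_numeral of_nat_power)
  moreover obtain m where "n = Suc (Suc m)" using assms by (metis less_imp_Suc_add add_Suc)
  then have "(2::real) ^ n = 4 * 2 ^ (n - 2)" by simp
  moreover have "(0::real) < 2 ^ (n - 2)" by simp
  ultimately show "1/8 * 2 ^ n < real (card D)" by linarith
qed

section \<open>Averaging over the hard functions\<close>

lemma prob_eq_1_imp_in_support:
  "measure_pmf.prob T A = 1 \<Longrightarrow> s \<in> set_pmf T \<Longrightarrow> s \<in> A"
  using measure_pmf.AE_prob_1 unfolding AE_measure_pmf_iff by blast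

lemma averaging_count_bound:
  fixes T :: "'a pmf" and W :: "nat \<Rightarrow> 'a set"
  assumes prob: "\<And>i. i < m \<Longrightarrow> measure_pmf.prob T (W i) \<ge> p"
    and count: "\<And>s. s \<in> set_pmf T \<Longrightarrow> real (card {i \<in> {..<m}. s \<in> W i}) \<le> K"
  shows "p * real m \<le> K"
proof -
  have integrable: "integrable (measure_pmf T) (indicator (W i) :: 'a \<Rightarrow> real)" for i
    by (rule measure_pmf.integrable_const_bound[where B=1]) (auto simp: indicator_def)
  have "p * real m = (\<Sum>i<m. p)" by simp
  also have "\<dots> \<le> (\<Sum>i<m. measure_pmf.prob T (W i))" using prob by (intro sum_mono) auto
  also have "\<dots> = measure_pmf.expectation T (\<lambda>s. \<Sum>i<m. indicator (W i) s)"
    using integrable by simp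
  also have "\<dots> \<le> K"
  proof (rule measure_pmf.integral_le_const)
    show "integrable (measure_pmf T) (\<lambda>s. \<Sum>i<m. indicator (W i) s :: real)"
      using integrable by auto
    have "(\<Sum>i<m. indicator (W i) s) = real (card {i \<in> {..<m}. s \<in> W i})" for s
      by (simp add: indicator_def sum.If_cases Int_def)
    then show "AE s in measure_pmf T. (\<Sum>i<m. indicator (W i) s) \<le> K"
      using count by (simp add: AE_measure_pmf_iff)
  qed
  finally show ?thesis .
qed

lemma na_rejects_hard_fn_imp_queries_diagonal:
  assumes T: "na_one_sided_tester n eps q T" and s: "(Q, D) \<in> set_pmf T"
    and reject: "\<not> D (map (hard_fn i) Q)"
  shows "queries_diagonal i (set Q)"
proof (rule ccontr)
  assume "\<not> queries_diagonal i (set Q)"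
  then have "submodular_on n (hard_fn_completion i (set Q))" by (rule hard_fn_completion_submodular)
  then have "D (map (hard_fn_completion i (set Q)) Q)"
    using T s prob_eq_1_imp_in_support unfolding na_one_sided_tester_def by fastforce
  moreover have "map (hard_fn_completion i (set Q)) Q = map (hard_fn i) Q"
    by (simp add: hard_fn_completion_eq_hard_fn)
  ultimately show False using reject by simp
qed

lemma na_tester_query_bound:
  assumes "na_one_sided_tester n (1/8) q T"
  shows "2/3 * real (n - 1) \<le> real q ^ 2"
proof (rule averaging_count_bound[where W = "\<lambda>i. {(Q, D). \<not> D (map (hard_fn i) Q)}"])
  show "measure_pmf.prob T {(Q, D). \<not> D (map (hard_fn i) Q)} \<ge> 2/3" if "i < n - 1" for i
    using assms hard_fn_far[of i n] that unfolding na_one_sided_tester_def by auto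
next
  fix s assume s: "s \<in> set_pmf T"
  obtain Q D where QD: "s = (Q, D)" by fastforce
  have "{i \<in> {..<n - 1}. s \<in> {(Q, D). \<not> D (map (hard_fn i) Q)}} \<subseteq> {i. queries_diagonal i (set Q)}"
    using na_rejects_hard_fn_imp_queries_diagonal assms s QD by fastforce
  then have "card {i \<in> {..<n - 1}. s \<in> {(Q, D). \<not> D (map (hard_fn i) Q)}}
      \<le> card {i. queries_diagonal i (set Q)}"
    by (intro card_mono finite_queries_diagonal) simp_all
  also have "\<dots> \<le> q ^ 2"
    using assms s QD by (intro card_queries_diagonal_list_le) (auto simp: na_one_sided_tester_def)
  finally have "card {i \<in> {..<n - 1}. s \<in> {(Q, D). \<not> D (map (hard_fn i) Q)}} \<le> q ^ 2" .
  then show "real (card {i \<in> {..<n - 1}. s \<in> {(Q, D). \<not> D (map (hard_fn i) Q)}}) \<le> real q ^ 2"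
    by (simp flip: of_nat_power)
qed

section \<open>Adaptive testers\<close>

lemma card_qpath_image_le:
  assumes "\<forall>f\<in>F. \<forall>x. f x \<in> {u x, v x}" and "\<forall>f\<in>F. length (qpath t f) \<le> q"
  shows "finite (qpath t ` F) \<and> card (qpath t ` F) \<le> 2 ^ q"
  using assms
proof (induction t arbitrary: F q)
  case (Leaf b)
  have "qpath (Leaf b) ` F \<subseteq> {[]}" by auto
  then have "finite (qpath (Leaf b) ` F)" and "card (qpath (Leaf b) ` F) \<le> 1"
    using finite_subset card_mono[of "{[]}"] by auto
  then show ?case using le_trans[OF _ one_le_power[of "2::nat" q]] by simp
next
  case (Query x k)
  show ?case
  proof (cases "F = {}")
    case False
    then obtain f where "f \<in> F" by blast
    then have "Suc (length (qpath (k (f x)) f)) \<le> q" using Query.prems(2) by simp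
    then have "q \<ge> 1" by simp
    define F\<^sub>u where "F\<^sub>u = {f \<in> F. f x = u x}"
    define F\<^sub>v where "F\<^sub>v = {f \<in> F. f x = v x}"
    have IH: "finite (qpath (k (w x)) ` G) \<and> card (qpath (k (w x)) ` G) \<le> 2 ^ (q - 1)"
      if "G = {f \<in> F. f x = w x}" for G w
      by (rule Query.IH) (use Query.prems that in auto)
    let ?U = "qpath (k (u x)) ` F\<^sub>u \<union> qpath (k (v x)) ` F\<^sub>v"
    have sub: "qpath (Query x k) ` F \<subseteq> Cons x ` ?U"
    proof
      fix p assume "p \<in> qpath (Query x k) ` F"
      then obtain f where f: "f \<in> F" "p = x # qpath (k (f x)) f" by auto
      then consider "f \<in> F\<^sub>u" "f x = u x" | "f \<in> F\<^sub>v" "f x = v x"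
        using Query.prems(1) unfolding F\<^sub>u_def F\<^sub>v_def by blast
      then show "p \<in> Cons x ` ?U" using f by cases auto
    qed
    have "finite ?U" using IH[of _ u, OF F\<^sub>u_def] IH[of _ v, OF F\<^sub>v_def] by simp
    then have "card (qpath (Query x k) ` F) \<le> card ?U"
      using card_mono[OF _ sub] card_image_le[of ?U "Cons x"] by simp
    also have "\<dots> \<le> 2 ^ (q - 1) + 2 ^ (q - 1)"
      using card_Un_le[of "qpath (k (u x)) ` F\<^sub>u" "qpath (k (v x)) ` F\<^sub>v"]
        IH[of _ u, OF F\<^sub>u_def, THEN conjunct2] IH[of _ v, OF F\<^sub>v_def, THEN conjunct2] by linarith
    also have "\<dots> = 2 ^ q" using \<open>q \<ge> 1\<close> by (cases q) auto
    finally show ?thesis using \<open>finite ?U\<close> sub finite_subset by blast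
  qed simp
qed

lemma run_cong: "(\<And>x. x \<in> set (qpath t f) \<Longrightarrow> g x = f x) \<Longrightarrow> run t g = run t f"
  by (induction t) auto

lemma ad_rejects_hard_fn_imp_queries_diagonal:
  assumes T: "ad_one_sided_tester n eps q T" and t: "t \<in> set_pmf T"
    and reject: "\<not> run t (hard_fn i)"
  shows "queries_diagonal i (set (qpath t (hard_fn i)))"
proof (rule ccontr)
  let ?Q = "set (qpath t (hard_fn i))"
  assume "\<not> queries_diagonal i ?Q"
  then have "submodular_on n (hard_fn_completion i ?Q)" by (rule hard_fn_completion_submodular)
  then have "run t (hard_fn_completion i ?Q)"
    using T t prob_eq_1_imp_in_support unfolding ad_one_sided_tester_def by fastforce
  moreover have "run t (hard_fn_completion i ?Q) = run t (hard_fn i)"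
    by (rule run_cong) (simp add: hard_fn_completion_eq_hard_fn)
  ultimately show False using reject by simp
qed

lemma ad_tester_query_bound:
  assumes T: "ad_one_sided_tester n (1/8) q T"
  shows "2/3 * real (n - 1) \<le> 2 ^ q * real q ^ 2"
proof (rule averaging_count_bound[where W = "\<lambda>i. {t. \<not> run t (hard_fn i)}"])
  show "measure_pmf.prob T {t. \<not> run t (hard_fn i)} \<ge> 2/3" if "i < n - 1" for i
    using T hard_fn_far[of i n] that unfolding ad_one_sided_tester_def by auto
next
  fix t assume t: "t \<in> set_pmf T"
  have length: "length (qpath t f) \<le> q" for f using T t unfolding ad_one_sided_tester_def by auto
  define P where "P = qpath t ` hard_fn ` {..<n - 1}"
  have P: "finite P \<and> card P \<le> 2 ^ q" unfolding P_def
    by (rule card_qpath_image_le[where u = concave_card and v = "\<lambda>x. concave_card x + 1"])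
      (auto simp: hard_fn_def agree_ind_def length)
  have "{i \<in> {..<n - 1}. t \<in> {t. \<not> run t (hard_fn i)}} \<subseteq> (\<Union>p\<in>P. {i. queries_diagonal i (set p)})"
    using ad_rejects_hard_fn_imp_queries_diagonal[OF T t] unfolding P_def by blast
  then have "card {i \<in> {..<n - 1}. t \<in> {t. \<not> run t (hard_fn i)}}
      \<le> card (\<Union>p\<in>P. {i. queries_diagonal i (set p)})"
    using P by (intro card_mono finite_UN_I finite_queries_diagonal) simp_all
  also have "\<dots> \<le> (\<Sum>p\<in>P. card {i. queries_diagonal i (set p)})" by (rule card_UN_le) (use P in blast)
  also have "\<dots> \<le> (\<Sum>p\<in>P. q ^ 2)"
    using length unfolding P_def by (intro sum_mono card_queries_diagonal_list_le) auto
  also have "\<dots> \<le> 2 ^ q * q ^ 2" using P by simp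
  finally have "real (card {i \<in> {..<n - 1}. t \<in> {t. \<not> run t (hard_fn i)}}) \<le> real (2 ^ q * q ^ 2)"
    by (simp only: of_nat_le_iff)
  then show "real (card {i \<in> {..<n - 1}. t \<in> {t. \<not> run t (hard_fn i)}}) \<le> 2 ^ q * real q ^ 2"
    by simp
qed

lemma sqrt_le_of_sq_bound:
  assumes "n \<ge> 2" and "2/3 * real (n - 1) \<le> real q ^ 2"
  shows "1/2 * sqrt (real n) \<le> real q"
proof -
  have "real n / 4 \<le> real q ^ 2" using assms by (simp add: of_nat_diff)
  then have "sqrt (real n / 4) \<le> real q" by (simp add: real_le_lsqrt)
  then show ?thesis by (simp add: real_sqrt_divide)
qed

lemma square_le_four_power: "q ^ 2 \<le> (4::nat) ^ q"
proof -
  have "q ^ 2 \<le> (2 ^ q) ^ 2" using less_exp[of q] by (simp add: power_mono)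
  also have "\<dots> = (2 ^ 2) ^ q" by (simp only: power_mult[symmetric] mult.commute)
  also have "\<dots> = 4 ^ q" by simp
  finally show ?thesis .
qed

lemma ln_le_of_exp_bound:
  assumes "n \<ge> 3" and "2/3 * real (n - 1) \<le> 2 ^ q * real q ^ 2"
  shows "1/5 * ln (real n) \<le> real q"
proof -
  have "2 ^ q * q ^ 2 \<le> (2::nat) ^ q * 4 ^ q" using square_le_four_power by simp
  also have "\<dots> = 8 ^ q" by (simp flip: power_mult_distrib)
  finally have "real (2 ^ q * q ^ 2) \<le> real (8 ^ q)" by (simp only: of_nat_le_iff)
  then have eight: "2 * real n - 2 \<le> 8 ^ q * 3" using assms by (simp add: of_nat_diff)
  then have "q \<ge> 1" using assms by (cases q) auto
  then have "4 * (8::real) ^ q \<le> 4 ^ q * 8 ^ q"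
    using power_increasing[of 1 q "4::real"] by (intro mult_right_mono) simp_all
  also have "\<dots> = 32 ^ q" by (simp flip: power_mult_distrib)
  finally have "4 * (8::real) ^ q \<le> 32 ^ q" .
  moreover have "(1::real) \<le> 8 ^ q" by simp
  ultimately have "real n \<le> 32 ^ q" using eight by linarith
  then have "ln (real n) \<le> ln (32 ^ q)" using assms by (intro ln_mono) simp_all
  also have "\<dots> = real q * (5 * ln 2)" using ln_realpow[of 2 5] by (simp add: ln_realpow)
  also have "\<dots> \<le> real q * 5" using ln_le_minus_one[of 2] by (intro mult_left_mono) simp_all
  finally show ?thesis by simp
qed

theorem corollary3:
  shows "(\<exists>eps>0. \<exists>c>0. \<exists>N. \<forall>n\<ge>N. \<forall>q T.
            na_one_sided_tester n eps q T \<longrightarrow> real q \<ge> c * sqrt (real n)) \<and>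
         (\<exists>eps>0. \<exists>c>0. \<exists>N. \<forall>n\<ge>N. \<forall>q T.
            ad_one_sided_tester n eps q T \<longrightarrow> real q \<ge> c * ln (real n))"
proof
  have "\<forall>n\<ge>2. \<forall>q T. na_one_sided_tester n (1/8) q T \<longrightarrow> real q \<ge> 1/2 * sqrt (real n)"
    using na_tester_query_bound sqrt_le_of_sq_bound by blast
  then show "\<exists>eps>0. \<exists>c>0. \<exists>N. \<forall>n\<ge>N. \<forall>q T.
      na_one_sided_tester n eps q T \<longrightarrow> real q \<ge> c * sqrt (real n)"
    by (intro exI[of _ "1/8::real"] exI[of _ "1/2::real"] exI[of _ "2::nat"] conjI) simp_all
  have "\<forall>n\<ge>3. \<forall>q T. ad_one_sided_tester n (1/8) q T \<longrightarrow> real q \<ge> 1/5 * ln (real n)"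
    using ad_tester_query_bound ln_le_of_exp_bound by blast
  then show "\<exists>eps>0. \<exists>c>0. \<exists>N. \<forall>n\<ge>N. \<forall>q T.
      ad_one_sided_tester n eps q T \<longrightarrow> real q \<ge> c * ln (real n)"
    by (intro exI[of _ "1/8::real"] exI[of _ "1/5::real"] exI[of _ "3::nat"] conjI) simp_all
qed

end
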